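(* Let $\mathfrak{Q}\subset\mathbb{R}^2$ be an open subset with vanishing first de Rham cohomology $H^1_{dR}(\mathfrak{Q})=0$, and let $(\theta_t)_{t\in\mathbb{R}}$ be a twisted-periodic $1$-form on $\mathfrak{Q}$ (see context). For a loop $q\in\Lambda\mathfrak{Q}:=W^{1,2}(S^1,\mathfrak{Q})$, viewed as a $1$-periodic map $\mathbb{R}\to\mathfrak{Q}$, and $k\in\mathbb{Z}$, set $$\int_k^{k+1}q^*\theta:=\int_k^{k+1}\theta_t|_{q_t}\dot q_t\,dt.$$ Then this quantity is independent of $k\in\mathbb{Z}$; hence it defines a map $\Lambda\mathfrak{Q}\to\mathbb{R}$.
   Context: $S^1=\mathbb{R}/\mathbb{Z}$. A twisted-periodic $1$-form on $\mathfrak{Q}$ is a smooth family $\theta_t=A^1_t\,dq_1+A^2_t\,dq_2$, $t\in\mathbb{R}$, with smooth $A^1,A^2\colon\mathbb{R}\times\mathfrak{Q}\to\mathbb{R}$, such that $\dot\theta_{t+1}=\dot\theta_t$ and $d\theta_{t+1}=d\theta_t$ for all $t$, where the dot is the derivative in $t$ and $d$ the exterior derivative on $\mathfrak{Q}$. *)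

theory Defs
  imports "HOL-Analysis.Analysis"
begin

fun higher_differentiable_on ::
  "'a::real_normed_vector set \<Rightarrow> ('a \<Rightarrow> 'b::real_normed_vector) \<Rightarrow> nat \<Rightarrow> bool" where
  "higher_differentiable_on S f 0 = continuous_on S f"
| "higher_differentiable_on S f (Suc n) =
     ((\<forall>x\<in>S. f differentiable (at x)) \<and>
      (\<forall>v. higher_differentiable_on S (\<lambda>x. frechet_derivative f (at x) v) n))"

definition smooth_on :: "'a::real_normed_vector set \<Rightarrow> ('a \<Rightarrow> 'b::real_normed_vector) \<Rightarrow> bool" where
  "smooth_on S f \<longleftrightarrow> (\<forall>n. higher_differentiable_on S f n)"

definition d1 :: "(real \<times> real \<Rightarrow> real) \<Rightarrow> real \<times> real \<Rightarrow> real" where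
  "d1 f q = deriv (\<lambda>x. f (x, snd q)) (fst q)"

definition d2 :: "(real \<times> real \<Rightarrow> real) \<Rightarrow> real \<times> real \<Rightarrow> real" where
  "d2 f q = deriv (\<lambda>y. f (fst q, y)) (snd q)"

(* H^1_dR(Q) = 0: every closed smooth 1-form B1 dq1 + B2 dq2 on Q is exact *)
definition vanishing_H1_dR :: "(real \<times> real) set \<Rightarrow> bool" where
  "vanishing_H1_dR Q \<longleftrightarrow>
     (\<forall>B1 B2. smooth_on Q B1 \<and> smooth_on Q B2 \<and> (\<forall>q\<in>Q. d1 B2 q = d2 B1 q) \<longrightarrow>
        (\<exists>f. smooth_on Q f \<and> (\<forall>q\<in>Q. d1 f q = B1 q \<and> d2 f q = B2 q)))"

(* theta_t = A1 t dq1 + A2 t dq2, a twisted-periodic 1-form on Q *)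
definition twisted_periodic_form ::
  "(real \<times> real) set \<Rightarrow> (real \<Rightarrow> real \<times> real \<Rightarrow> real) \<Rightarrow> (real \<Rightarrow> real \<times> real \<Rightarrow> real) \<Rightarrow> bool" where
  "twisted_periodic_form Q A1 A2 \<longleftrightarrow>
     smooth_on (UNIV \<times> Q) (\<lambda>p. A1 (fst p) (snd p)) \<and>
     smooth_on (UNIV \<times> Q) (\<lambda>p. A2 (fst p) (snd p)) \<and>
     (\<forall>t. \<forall>q\<in>Q. deriv (\<lambda>s. A1 s q) (t + 1) = deriv (\<lambda>s. A1 s q) t \<and>
                 deriv (\<lambda>s. A2 s q) (t + 1) = deriv (\<lambda>s. A2 s q) t) \<and>
     (\<forall>t. \<forall>q\<in>Q. d1 (A2 (t + 1)) q - d2 (A1 (t + 1)) q = d1 (A2 t) q - d2 (A1 t) q)"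

definition W12_loop :: "(real \<times> real) set \<Rightarrow> (real \<Rightarrow> real \<times> real) \<Rightarrow> (real \<Rightarrow> real \<times> real) \<Rightarrow> bool" where
  "W12_loop Q q q' \<longleftrightarrow>
     (\<forall>t. q (t + 1) = q t) \<and> (\<forall>t. q t \<in> Q) \<and>
     (\<forall>a b. a \<le> b \<longrightarrow> (q' has_integral (q b - q a)) {a..b}) \<and>
     (\<forall>a b. (\<lambda>t. (norm (q' t))\<^sup>2) integrable_on {a..b})"

definition pullback_integrand ::
  "(real \<Rightarrow> real \<times> real \<Rightarrow> real) \<Rightarrow> (real \<Rightarrow> real \<times> real \<Rightarrow> real) \<Rightarrow>
   (real \<Rightarrow> real \<times> real) \<Rightarrow> (real \<Rightarrow> real \<times> real) \<Rightarrow> real \<Rightarrow> real" where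
  "pullback_integrand A1 A2 q q' t = A1 t (q t) * fst (q' t) + A2 t (q t) * snd (q' t)"

end

theory Submission
  imports Defs
begin

text \<open>
  Since the time derivative of \<open>\<theta>\<^sub>t\<close> is 1-periodic, \<open>\<beta> = \<theta>\<^sub>t\<^sub>+\<^sub>1 - \<theta>\<^sub>t\<close> does not depend
  on \<open>t\<close>; since \<open>d\<theta>\<^sub>t\<close> is 1-periodic, \<open>\<beta>\<close> is closed, so \<open>\<beta> = df\<close> because \<open>H\<^sup>1\<^sub>d\<^sub>R(Q) = 0\<close>.
  Shifting the interval of integration by one period therefore changes the integral by the
  integral of \<open>df(q\<^sub>t) q'\<^sub>t\<close> over one period, which is \<open>f(q(k + 1)) - f(q(k)) = 0\<close>.
  For a \<open>W\<^sup>1\<^sup>,\<^sup>2\<close> loop this chain rule, and the replacement of \<open>q'(t + 1)\<close> by \<open>q'(t)\<close> (which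
  agree only almost everywhere), are both instances of one Riemann--Stieltjes type identity:
  \<open>\<integral>\<^sub>a\<^sup>b g \<bullet> \<gamma>' = \<Phi> b - \<Phi> a\<close> whenever \<open>g t\<close> linearises \<open>\<Phi>\<close> along \<open>\<gamma>\<close> uniformly on short
  intervals; the local errors are summed over a fine tagged division.
\<close>

lemma higher_differentiable_on_cong:
  assumes "open S" "\<And>x. x \<in> S \<Longrightarrow> f x = g x" "higher_differentiable_on S f n"
  shows "higher_differentiable_on S g n"
  using assms
proof (induction n arbitrary: f g)
  case 0
  then show ?case using continuous_on_cong by fastforce
next
  case (Suc n)
  have fd: "frechet_derivative f (at x) = frechet_derivative g (at x)" if "x \<in> S" for x
  proof -
    have "(f has_derivative D) (at x) \<longleftrightarrow> (g has_derivative D) (at x)" for D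
      using has_derivative_transform_within_open[of f D x UNIV S g]
        has_derivative_transform_within_open[of g D x UNIV S f] Suc.prems that by auto
    then show ?thesis unfolding frechet_derivative_def by simp
  qed
  have "g differentiable (at x)" if xS: "x \<in> S" for x
  proof -
    obtain D where "(f has_derivative D) (at x)" using Suc.prems xS by (auto simp: differentiable_def)
    then have "(g has_derivative D) (at x)"
      using has_derivative_transform_within_open[of f D x UNIV S g] Suc.prems xS by auto
    then show ?thesis by (auto simp: differentiable_def)
  qed
  moreover have "higher_differentiable_on S (\<lambda>x. frechet_derivative g (at x) v) n" for v
    using Suc.IH[of "\<lambda>x. frechet_derivative f (at x) v" "\<lambda>x. frechet_derivative g (at x) v"]
      Suc.prems fd by auto
  ultimately show ?case by simp
qed

lemma higher_differentiable_on_diff: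
  assumes "open S" "higher_differentiable_on S f n" "higher_differentiable_on S g n"
  shows "higher_differentiable_on S (\<lambda>x. f x - g x) n"
  using assms
proof (induction n arbitrary: f g)
  case 0
  then show ?case by (auto intro: continuous_intros)
next
  case (Suc n)
  have fd: "frechet_derivative (\<lambda>x. f x - g x) (at x) v = frechet_derivative f (at x) v - frechet_derivative g (at x) v"
    if "x \<in> S" for x v
  proof -
    have "(f has_derivative frechet_derivative f (at x)) (at x)" "(g has_derivative frechet_derivative g (at x)) (at x)"
      using Suc.prems(2,3) that by (simp_all add: frechet_derivative_works[symmetric])
    then have "((\<lambda>x. f x - g x) has_derivative (\<lambda>v. frechet_derivative f (at x) v - frechet_derivative g (at x) v)) (at x)"
      by (intro derivative_intros)
    then show ?thesis using frechet_derivative_at by metis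
  qed
  have "(\<lambda>x. f x - g x) differentiable (at x)" if "x \<in> S" for x
    using Suc.prems that by auto
  moreover have "higher_differentiable_on S (\<lambda>x. frechet_derivative (\<lambda>x. f x - g x) (at x) v) n" for v
    by (rule higher_differentiable_on_cong[OF \<open>open S\<close>,
          of "\<lambda>x. frechet_derivative f (at x) v - frechet_derivative g (at x) v"])
      (use fd Suc in auto)
  ultimately show ?case by simp
qed

lemma higher_differentiable_on_slice:
  fixes g :: "real \<times> 'a::real_normed_vector \<Rightarrow> 'b::real_normed_vector"
  assumes "open S" "higher_differentiable_on (UNIV \<times> S) g n"
  shows "higher_differentiable_on S (\<lambda>x. g (c, x)) n"
  using assms
proof (induction n arbitrary: g)
  case 0
  then show ?case
    by (auto intro!: continuous_on_compose2[of "UNIV \<times> S" g] continuous_intros)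
next
  case (Suc n)
  have hd: "((\<lambda>y. g (c, y)) has_derivative (\<lambda>v. frechet_derivative g (at (c, x)) (0, v))) (at x)"
    if "x \<in> S" for x
  proof -
    have "(g has_derivative frechet_derivative g (at (c, x))) (at (c, x))"
      using Suc.prems that frechet_derivative_works by auto
    moreover have "((\<lambda>y. (c, y)) has_derivative (\<lambda>v. (0, v))) (at x)"
      by (auto intro!: derivative_eq_intros)
    ultimately show ?thesis using diff_chain_at[of "\<lambda>y. (c, y)" "\<lambda>v. (0, v)" x g] by (simp add: o_def)
  qed
  have "(\<lambda>y. g (c, y)) differentiable (at x)" if "x \<in> S" for x
    using hd[OF that] differentiable_def by blast
  moreover have "higher_differentiable_on S (\<lambda>x. frechet_derivative (\<lambda>y. g (c, y)) (at x) v) n" for v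
  proof (rule higher_differentiable_on_cong[OF \<open>open S\<close>, of "\<lambda>x. frechet_derivative g (at (c, x)) (0, v)"])
    show "frechet_derivative g (at (c, x)) (0, v) = frechet_derivative (\<lambda>y. g (c, y)) (at x) v" if "x \<in> S" for x
      using hd[OF that] frechet_derivative_at by metis
    show "higher_differentiable_on S (\<lambda>x. frechet_derivative g (at (c, x)) (0, v)) n"
      using Suc.IH[of "\<lambda>p. frechet_derivative g (at p) (0, v)"] Suc.prems by auto
  qed
  ultimately show ?case by simp
qed

lemma smooth_on_diff:
  assumes "open S" "smooth_on S f" "smooth_on S g"
  shows "smooth_on S (\<lambda>x. f x - g x)"
  using assms higher_differentiable_on_diff unfolding smooth_on_def by blast

lemma smooth_on_slice:
  fixes g :: "real \<times> 'a::real_normed_vector \<Rightarrow> 'b::real_normed_vector"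
  assumes "open S" "smooth_on (UNIV \<times> S) g"
  shows "smooth_on S (\<lambda>x. g (c, x))"
  using assms higher_differentiable_on_slice unfolding smooth_on_def by blast

lemma smooth_on_imp_continuous_on: "smooth_on S f \<Longrightarrow> continuous_on S f"
  unfolding smooth_on_def by (metis higher_differentiable_on.simps(1))

lemma smooth_on_imp_differentiable: "smooth_on S f \<Longrightarrow> x \<in> S \<Longrightarrow> f differentiable (at x)"
  unfolding smooth_on_def by (metis higher_differentiable_on.simps(2))

lemma smooth_on_imp_differentiable_in_time:
  fixes g :: "real \<times> 'a::real_normed_vector \<Rightarrow> 'b::real_normed_vector"
  assumes "smooth_on (UNIV \<times> S) g" "x \<in> S"
  shows "(\<lambda>t. g (t, x)) differentiable (at t)"
proof -
  have "(\<lambda>t. (t, x)) differentiable (at t)" by (auto intro!: derivative_intros)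
  moreover have "g differentiable (at (t, x))" using smooth_on_imp_differentiable assms by blast
  ultimately show ?thesis using differentiable_chain_at[of "\<lambda>t. (t, x)"] by (simp add: o_def)
qed

lemma linear_real_pair_eq:
  fixes D :: "real \<times> real \<Rightarrow> real"
  assumes "linear D"
  shows "D v = fst v * D (1, 0) + snd v * D (0, 1)"
proof -
  have "D v = D (fst v *\<^sub>R (1, 0) + snd v *\<^sub>R (0, 1))" by simp
  also have "\<dots> = fst v * D (1, 0) + snd v * D (0, 1)"
    using linear_add[OF assms] linear_scale[OF assms] by (simp only: real_scaleR_def)
  finally show ?thesis .
qed

lemma has_derivative_imp_d1:
  fixes f :: "real \<times> real \<Rightarrow> real"
  assumes "(f has_derivative D) (at x)"
  shows "d1 f x = D (1, 0)"
proof -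
  have "((\<lambda>u. (u, snd x)) has_derivative (\<lambda>u. (u, 0))) (at (fst x))"
    by (auto intro!: derivative_eq_intros)
  then have "((\<lambda>u. f (u, snd x)) has_derivative (\<lambda>u. D (u, 0))) (at (fst x))"
    using diff_chain_at[of "\<lambda>u. (u, snd x)" _ "fst x" f D] assms by (simp add: o_def)
  moreover have "(\<lambda>u. D (u, 0)) = (*) (D (1, 0))"
  proof
    fix u
    show "D (u, 0) = D (1, 0) * u"
      using linear_real_pair_eq[OF has_derivative_linear[OF assms], of "(u, 0)"]
      by (simp only: fst_conv snd_conv mult_zero_left add_0_right mult.commute)
  qed
  ultimately have "((\<lambda>u. f (u, snd x)) has_real_derivative D (1, 0)) (at (fst x))"
    by (simp add: has_field_derivative_def)
  then show ?thesis unfolding d1_def by (rule DERIV_imp_deriv)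
qed

lemma has_derivative_imp_d2:
  fixes f :: "real \<times> real \<Rightarrow> real"
  assumes "(f has_derivative D) (at x)"
  shows "d2 f x = D (0, 1)"
proof -
  have "((\<lambda>u. (fst x, u)) has_derivative (\<lambda>u. (0, u))) (at (snd x))"
    by (auto intro!: derivative_eq_intros)
  then have "((\<lambda>u. f (fst x, u)) has_derivative (\<lambda>u. D (0, u))) (at (snd x))"
    using diff_chain_at[of "\<lambda>u. (fst x, u)" _ "snd x" f D] assms by (simp add: o_def)
  moreover have "(\<lambda>u. D (0, u)) = (*) (D (0, 1))"
  proof
    fix u
    show "D (0, u) = D (0, 1) * u"
      using linear_real_pair_eq[OF has_derivative_linear[OF assms], of "(0, u)"]
      by (simp only: fst_conv snd_conv mult_zero_left add_0_left mult.commute)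
  qed
  ultimately have "((\<lambda>u. f (fst x, u)) has_real_derivative D (0, 1)) (at (snd x))"
    by (simp add: has_field_derivative_def)
  then show ?thesis unfolding d2_def by (rule DERIV_imp_deriv)
qed

lemma has_derivative_eq_partials:
  fixes f :: "real \<times> real \<Rightarrow> real"
  assumes "(f has_derivative D) (at x)"
  shows "D = (\<lambda>v. (d1 f x, d2 f x) \<bullet> v)"
proof
  fix v :: "real \<times> real"
  show "D v = (d1 f x, d2 f x) \<bullet> v"
    using linear_real_pair_eq[OF has_derivative_linear[OF assms], of v]
    by (simp add: has_derivative_imp_d1[OF assms] has_derivative_imp_d2[OF assms] inner_prod_def mult.commute)
qed

lemma smooth_on_has_derivative_partials:
  fixes f :: "real \<times> real \<Rightarrow> real"
  assumes "smooth_on S f" and "x \<in> S"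
  shows "(f has_derivative (\<lambda>v. (d1 f x, d2 f x) \<bullet> v)) (at x)"
proof -
  obtain D where "(f has_derivative D) (at x)"
    using smooth_on_imp_differentiable[OF assms] by (auto simp: differentiable_def)
  then show ?thesis using has_derivative_eq_partials by metis
qed

lemma d1_diff:
  fixes f g :: "real \<times> real \<Rightarrow> real"
  assumes "f differentiable (at x)" "g differentiable (at x)"
  shows "d1 (\<lambda>y. f y - g y) x = d1 f x - d1 g x"
proof -
  obtain Df Dg where f: "(f has_derivative Df) (at x)" and g: "(g has_derivative Dg) (at x)"
    using assms by (auto simp: differentiable_def)
  have "((\<lambda>y. f y - g y) has_derivative (\<lambda>v. Df v - Dg v)) (at x)"
    using f g by (intro derivative_intros)
  then show ?thesis
    using has_derivative_imp_d1[OF f] has_derivative_imp_d1[OF g] by (simp add: has_derivative_imp_d1)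
qed

lemma d2_diff:
  fixes f g :: "real \<times> real \<Rightarrow> real"
  assumes "f differentiable (at x)" "g differentiable (at x)"
  shows "d2 (\<lambda>y. f y - g y) x = d2 f x - d2 g x"
proof -
  obtain Df Dg where f: "(f has_derivative Df) (at x)" and g: "(g has_derivative Dg) (at x)"
    using assms by (auto simp: differentiable_def)
  have "((\<lambda>y. f y - g y) has_derivative (\<lambda>v. Df v - Dg v)) (at x)"
    using f g by (intro derivative_intros)
  then show ?thesis
    using has_derivative_imp_d2[OF f] has_derivative_imp_d2[OF g] by (simp add: has_derivative_imp_d2)
qed

lemma increment_const_if_deriv_periodic:
  fixes g :: "real \<Rightarrow> real"
  assumes "\<And>t. g differentiable (at t)" and "\<And>t. deriv g (t + 1) = deriv g t"
  shows "g (t + 1) - g t = g 1 - g 0"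
proof -
  have "((\<lambda>s. g (s + 1) - g s) has_real_derivative 0) (at s)" for s
  proof -
    have "(g has_real_derivative deriv g (s + 1)) (at (s + 1))" "(g has_real_derivative deriv g s) (at s)"
      using assms(1) by (simp_all add: DERIV_deriv_iff_real_differentiable)
    then have "((\<lambda>s. g (s + 1) - g s) has_real_derivative deriv g (s + 1) - deriv g s) (at s)"
      by (intro DERIV_diff) (simp_all add: DERIV_shift)
    then show ?thesis using assms(2) by simp
  qed
  then show ?thesis using DERIV_isconst_all[of "\<lambda>s. g (s + 1) - g s" t 0] by simp
qed

lemma twisted_periodic_form_increment:
  assumes "twisted_periodic_form Q A1 A2" and "x \<in> Q"
  shows "A1 (t + 1) x - A1 t x = A1 1 x - A1 0 x"
    and "A2 (t + 1) x - A2 t x = A2 1 x - A2 0 x"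
proof -
  note form = assms(1)[unfolded twisted_periodic_form_def]
  have "(\<lambda>s. A1 s x) differentiable (at s)" "(\<lambda>s. A2 s x) differentiable (at s)" for s
    using smooth_on_imp_differentiable_in_time[of Q "\<lambda>p. A1 (fst p) (snd p)" x s]
      smooth_on_imp_differentiable_in_time[of Q "\<lambda>p. A2 (fst p) (snd p)" x s] form assms(2)
    by simp_all
  then show "A1 (t + 1) x - A1 t x = A1 1 x - A1 0 x" "A2 (t + 1) x - A2 t x = A2 1 x - A2 0 x"
    using increment_const_if_deriv_periodic[of "\<lambda>s. A1 s x"] increment_const_if_deriv_periodic[of "\<lambda>s. A2 s x"]
      form assms(2) by simp_all
qed

lemma twisted_periodic_form_shift_exact:
  assumes "open Q" and "vanishing_H1_dR Q" and "twisted_periodic_form Q A1 A2"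
  obtains \<beta> f where "continuous_on Q \<beta>" and "\<And>x. x \<in> Q \<Longrightarrow> (f has_derivative (\<lambda>v. \<beta> x \<bullet> v)) (at x)"
    and "\<And>t x. x \<in> Q \<Longrightarrow> (A1 (t + 1) x, A2 (t + 1) x) = (A1 t x, A2 t x) + \<beta> x"
proof -
  note form = assms(3)[unfolded twisted_periodic_form_def]
  have slice: "smooth_on Q (A1 c)" "smooth_on Q (A2 c)" for c
    using smooth_on_slice[OF \<open>open Q\<close>, of "\<lambda>p. A1 (fst p) (snd p)" c]
      smooth_on_slice[OF \<open>open Q\<close>, of "\<lambda>p. A2 (fst p) (snd p)" c] form
    by simp_all
  define B1 where "B1 x = A1 1 x - A1 0 x" for x
  define B2 where "B2 x = A2 1 x - A2 0 x" for x
  have B: "smooth_on Q B1" "smooth_on Q B2"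
    unfolding B1_def B2_def using smooth_on_diff[OF \<open>open Q\<close>] slice by blast+
  have "d1 B2 x = d2 B1 x" if "x \<in> Q" for x
  proof -
    have "A1 c differentiable (at x)" "A2 c differentiable (at x)" for c
      using smooth_on_imp_differentiable slice that by blast+
    moreover have "d1 (A2 1) x - d2 (A1 1) x = d1 (A2 0) x - d2 (A1 0) x"
      using form that by (metis add_0)
    ultimately show ?thesis unfolding B1_def B2_def by (simp add: d1_diff d2_diff)
  qed
  then obtain f where "smooth_on Q f" and f: "\<And>x. x \<in> Q \<Longrightarrow> d1 f x = B1 x \<and> d2 f x = B2 x"
    using assms(2) B unfolding vanishing_H1_dR_def by blast
  define \<beta> where "\<beta> x = (B1 x, B2 x)" for x
  show ?thesis
  proof (rule that[of \<beta> f])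
    show "continuous_on Q \<beta>"
      unfolding \<beta>_def using B by (intro continuous_on_Pair smooth_on_imp_continuous_on)
    show "(f has_derivative (\<lambda>v. \<beta> x \<bullet> v)) (at x)" if "x \<in> Q" for x
      using smooth_on_has_derivative_partials[OF \<open>smooth_on Q f\<close> that] f[OF that] by (simp add: \<beta>_def)
    show "(A1 (t + 1) x, A2 (t + 1) x) = (A1 t x, A2 t x) + \<beta> x" if "x \<in> Q" for t x
      using twisted_periodic_form_increment[OF assms(3) that, of t]
      by (simp add: \<beta>_def B1_def B2_def algebra_simps)
  qed
qed

lemma twisted_periodic_form_continuous_along:
  assumes "twisted_periodic_form Q A1 A2" and "continuous_on {a..b} \<gamma>" and "\<And>t. \<gamma> t \<in> Q"
  shows "continuous_on {a..b} (\<lambda>t. (A1 t (\<gamma> t), A2 t (\<gamma> t)))"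
proof -
  have path: "continuous_on {a..b} (\<lambda>t. (t, \<gamma> t))"
    using assms(2) by (intro continuous_intros)
  have "continuous_on (UNIV \<times> Q) (\<lambda>p. A1 (fst p) (snd p))" "continuous_on (UNIV \<times> Q) (\<lambda>p. A2 (fst p) (snd p))"
    using assms(1) smooth_on_imp_continuous_on unfolding twisted_periodic_form_def by blast+
  then have "continuous_on {a..b} (\<lambda>t. A1 t (\<gamma> t))" "continuous_on {a..b} (\<lambda>t. A2 t (\<gamma> t))"
    using continuous_on_compose2[OF _ path] assms(3) by force+
  then show ?thesis by (rule continuous_on_Pair)
qed

definition antiderivative_on :: "real \<Rightarrow> real \<Rightarrow> (real \<Rightarrow> 'a::real_normed_vector) \<Rightarrow> (real \<Rightarrow> 'a) \<Rightarrow> bool"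
  where "antiderivative_on a b h \<gamma> \<longleftrightarrow>
    (\<forall>s t. a \<le> s \<longrightarrow> s \<le> t \<longrightarrow> t \<le> b \<longrightarrow> (h has_integral (\<gamma> t - \<gamma> s)) {s..t})"

lemma antiderivative_onD:
  "antiderivative_on a b h \<gamma> \<Longrightarrow> a \<le> s \<Longrightarrow> s \<le> t \<Longrightarrow> t \<le> b \<Longrightarrow> (h has_integral (\<gamma> t - \<gamma> s)) {s..t}"
  unfolding antiderivative_on_def by blast

lemma antiderivative_on_diff:
  assumes "antiderivative_on a b h1 \<gamma>1" "antiderivative_on a b h2 \<gamma>2"
  shows "antiderivative_on a b (\<lambda>s. h1 s - h2 s) (\<lambda>s. \<gamma>1 s - \<gamma>2 s)"
  unfolding antiderivative_on_def
proof (intro allI impI)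
  fix s t
  assume "a \<le> s" "s \<le> t" "t \<le> b"
  then have "((\<lambda>s. h1 s - h2 s) has_integral (\<gamma>1 t - \<gamma>1 s) - (\<gamma>2 t - \<gamma>2 s)) {s..t}"
    using has_integral_diff antiderivative_onD[OF assms(1)] antiderivative_onD[OF assms(2)] by blast
  then show "((\<lambda>s. h1 s - h2 s) has_integral \<gamma>1 t - \<gamma>2 t - (\<gamma>1 s - \<gamma>2 s)) {s..t}"
    by (simp add: algebra_simps)
qed

lemma antiderivative_on_imp_continuous_on:
  fixes h \<gamma> :: "real \<Rightarrow> 'a::banach"
  assumes "antiderivative_on a b h \<gamma>"
  shows "continuous_on {a..b} \<gamma>"
proof (cases "a \<le> b")
  case True
  have "h integrable_on {a..b}"
    using antiderivative_onD[OF assms order_refl True order_refl] by blast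
  then have "continuous_on {a..b} (\<lambda>t. \<gamma> a + integral {a..t} h)"
    by (intro continuous_intros indefinite_integral_continuous_1)
  moreover have "\<gamma> a + integral {a..t} h = \<gamma> t" if "t \<in> {a..b}" for t
    using integral_unique[OF antiderivative_onD[OF assms order_refl]] that by auto
  ultimately show ?thesis
    using continuous_on_cong by (metis (no_types, lifting))
qed simp

lemma absolutely_integrable_on_if_square_integrable:
  fixes h :: "real \<Rightarrow> 'a::euclidean_space"
  assumes "h integrable_on {a..b}" and "(\<lambda>t. (norm (h t))\<^sup>2) integrable_on {a..b}"
  shows "h absolutely_integrable_on {a..b}"
proof (rule absolutely_integrable_integrable_bound[where g = "\<lambda>t. 1 + (norm (h t))\<^sup>2"])
  show "norm (h t) \<le> 1 + (norm (h t))\<^sup>2" for t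
    using sum_squares_bound[of "norm (h t)" 1] norm_ge_zero[of "h t"]
    unfolding power_one mult_1_right by linarith
  show "(\<lambda>t. 1 + (norm (h t))\<^sup>2) integrable_on {a..b}"
    using integrable_add[OF integrable_const_ivl assms(2)] by simp
qed (fact assms(1))

lemma absolutely_integrable_inner_continuous:
  fixes g h :: "real \<Rightarrow> 'a::euclidean_space"
  assumes "continuous_on {a..b} g" and "h absolutely_integrable_on {a..b}"
  shows "(\<lambda>s. g s \<bullet> h s) absolutely_integrable_on {a..b}"
proof (rule absolutely_integrable_bounded_measurable_product[where h = "(\<bullet>)"])
  show "bilinear ((\<bullet>) :: 'a \<Rightarrow> 'a \<Rightarrow> real)"
    by (simp add: bilinear_conv_bounded_bilinear bounded_bilinear_inner)
  show "g \<in> borel_measurable (lebesgue_on {a..b})"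
    by (rule continuous_imp_measurable_on_sets_lebesgue[OF assms(1)]) simp
  show "bounded (g ` {a..b})"
    using compact_continuous_image[OF assms(1) compact_Icc] by (rule compact_imp_bounded)
qed (use assms in auto)

lemma integral_inner_norm_bound:
  fixes k h :: "real \<Rightarrow> 'a::euclidean_space"
  assumes "(\<lambda>s. k s \<bullet> h s) integrable_on S" and "h absolutely_integrable_on S"
    and "\<And>s. s \<in> S \<Longrightarrow> norm (k s) \<le> e"
  shows "norm (integral S (\<lambda>s. k s \<bullet> h s)) \<le> e * integral S (\<lambda>s. norm (h s))"
proof -
  have "norm (integral S (\<lambda>s. k s \<bullet> h s)) \<le> integral S (\<lambda>s. e * norm (h s))"
  proof (rule integral_norm_bound_integral[OF assms(1)])
    show "(\<lambda>s. e * norm (h s)) integrable_on S"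
      using assms(2) integrable_on_cmult_left[of "\<lambda>s. norm (h s)" S e]
      by (simp add: absolutely_integrable_on_def)
    show "norm (k s \<bullet> h s) \<le> e * norm (h s)" if "s \<in> S" for s
    proof -
      have "norm (k s \<bullet> h s) \<le> norm (k s) * norm (h s)"
        using Cauchy_Schwarz_ineq2[of "k s" "h s"] by simp
      also have "\<dots> \<le> e * norm (h s)"
        using assms(3)[OF that] by (rule mult_right_mono) simp
      finally show ?thesis .
    qed
  qed
  then show ?thesis by simp
qed

lemma abs_increment_le_if_locally_dominated:
  fixes F M :: "real \<Rightarrow> real"
  assumes "a \<le> b" and "d > 0"
    and dominated: "\<And>t t'. a \<le> t \<Longrightarrow> t \<le> t' \<Longrightarrow> t' \<le> b \<Longrightarrow> t' - t < d \<Longrightarrow>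
                    \<bar>F t' - F t\<bar> \<le> e * (M t' - M t)"
  shows "\<bar>F b - F a\<bar> \<le> e * (M b - M a)"
proof -
  obtain p where p: "p tagged_division_of {a..b}" and fine: "(\<lambda>x. ball x (d / 2)) fine p"
    using fine_division_exists_real[OF gauge_ball] \<open>d > 0\<close> by (metis half_gt_zero)
  have "\<bar>F (Sup K) - F (Inf K)\<bar> \<le> e * (M (Sup K) - M (Inf K))" if xK: "(x, K) \<in> p" for x K
  proof -
    obtain u v where K: "K = {u..v}" and "x \<in> K"
      using tagged_division_ofD(2)[OF p xK] tagged_division_ofD(4)[OF p xK] by (metis box_real(2))
    then have "u \<le> v" by simp
    have "K \<subseteq> {a..b}" using tagged_division_ofD(3)[OF p xK] .
    moreover have "v - u < d"
    proof -
      have "K \<subseteq> ball x (d / 2)" using fine xK by (auto simp: fine_def)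
      then have "u \<in> ball x (d / 2)" "v \<in> ball x (d / 2)" using K \<open>u \<le> v\<close> by auto
      then show ?thesis unfolding mem_ball dist_real_def by arith
    qed
    ultimately show ?thesis using dominated K \<open>u \<le> v\<close> by auto
  qed
  then have "(\<Sum>(x, K)\<in>p. \<bar>F (Sup K) - F (Inf K)\<bar>) \<le> (\<Sum>(x, K)\<in>p. e * (M (Sup K) - M (Inf K)))"
    by (intro sum_mono) auto
  then have "\<bar>\<Sum>(x, K)\<in>p. F (Sup K) - F (Inf K)\<bar> \<le> (\<Sum>(x, K)\<in>p. e * (M (Sup K) - M (Inf K)))"
    using sum_abs[of "\<lambda>(x, K). F (Sup K) - F (Inf K)" p] unfolding split_def by linarith
  also have "\<dots> = e * (M b - M a)"
    using additive_tagged_division_1[OF \<open>a \<le> b\<close> p, of M]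
    by (simp add: sum_distrib_left[symmetric] split_def del: sum_distrib_left)
  finally show ?thesis
    by (simp add: additive_tagged_division_1[OF \<open>a \<le> b\<close> p])
qed

lemma eq_if_increments_dominated:
  fixes F M :: "real \<Rightarrow> real"
  assumes "a \<le> b"
    and dominated: "\<And>e. e > 0 \<Longrightarrow> \<exists>d>0. \<forall>t t'. a \<le> t \<longrightarrow> t \<le> t' \<longrightarrow> t' \<le> b \<longrightarrow> t' - t < d \<longrightarrow>
                    \<bar>F t' - F t\<bar> \<le> e * (M t' - M t)"
  shows "F b = F a"
proof (rule ccontr)
  assume "F b \<noteq> F a"
  then have pos: "\<bar>F b - F a\<bar> > 0" by simp
  define c where "c = \<bar>M b - M a\<bar> + 1"
  have "c > 0" by (simp add: c_def add_pos_nonneg)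
  define e where "e = \<bar>F b - F a\<bar> / (2 * c)"
  have "e > 0" using pos \<open>c > 0\<close> by (simp add: e_def)
  then obtain d where "d > 0" and "\<forall>t t'. a \<le> t \<longrightarrow> t \<le> t' \<longrightarrow> t' \<le> b \<longrightarrow> t' - t < d \<longrightarrow>
                    \<bar>F t' - F t\<bar> \<le> e * (M t' - M t)"
    using dominated by blast
  then have "\<bar>F b - F a\<bar> \<le> e * (M b - M a)"
    using abs_increment_le_if_locally_dominated[OF \<open>a \<le> b\<close> \<open>d > 0\<close>] by blast
  also have "\<dots> \<le> e * c" using \<open>e > 0\<close> by (intro mult_left_mono) (auto simp: c_def)
  also have "\<dots> = \<bar>F b - F a\<bar> / 2" using \<open>c > 0\<close> by (simp add: e_def)
  finally show False using pos by simp
qed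

lemma integral_Icc_increment:
  fixes f :: "real \<Rightarrow> 'a::banach"
  assumes "f integrable_on {a..b}" and "a \<le> t" "t \<le> t'" "t' \<le> b"
  shows "integral {a..t'} f - integral {a..t} f = integral {t..t'} f"
  using Henstock_Kurzweil_Integration.integral_combine[of a t t' f]
    integrable_subinterval_real[OF assms(1), of a t'] assms
  by (auto simp: algebra_simps)

lemma integral_inner_frozen_estimate:
  fixes g h :: "real \<Rightarrow> 'a::euclidean_space"
  assumes g: "continuous_on {t..t'} g" and h: "h absolutely_integrable_on {t..t'}"
    and I: "(h has_integral I) {t..t'}" and osc: "\<And>s. s \<in> {t..t'} \<Longrightarrow> norm (g s - g t) \<le> e"
  shows "\<bar>integral {t..t'} (\<lambda>s. g s \<bullet> h s) - g t \<bullet> I\<bar> \<le> e * integral {t..t'} (\<lambda>s. norm (h s))"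
proof -
  have "(\<lambda>s. g s \<bullet> h s) integrable_on {t..t'}"
    using absolutely_integrable_inner_continuous[OF g h] by (simp add: absolutely_integrable_on_def)
  moreover have "((\<lambda>s. g t \<bullet> h s) has_integral g t \<bullet> I) {t..t'}"
    using has_integral_linear[OF I bounded_linear_inner_right] by (simp add: o_def)
  ultimately have osc_int:
    "((\<lambda>s. (g s - g t) \<bullet> h s) has_integral integral {t..t'} (\<lambda>s. g s \<bullet> h s) - g t \<bullet> I) {t..t'}"
    using has_integral_diff[OF integrable_integral] by (simp add: inner_diff_left)
  show ?thesis
    using integral_inner_norm_bound[OF has_integral_integrable[OF osc_int] h osc]
    by (simp add: integral_unique[OF osc_int])
qed

lemma integral_inner_eq_if_locally_linear:
  fixes g h \<gamma> :: "real \<Rightarrow> 'a::euclidean_space" and \<Phi> :: "real \<Rightarrow> real"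
  assumes "a \<le> b" and g: "continuous_on {a..b} g" and h: "h absolutely_integrable_on {a..b}"
    and \<gamma>: "antiderivative_on a b h \<gamma>"
    and linear: "\<And>e. e > 0 \<Longrightarrow> \<exists>d>0. \<forall>t t'. a \<le> t \<longrightarrow> t \<le> t' \<longrightarrow> t' \<le> b \<longrightarrow> t' - t < d \<longrightarrow>
                   \<bar>\<Phi> t' - \<Phi> t - g t \<bullet> (\<gamma> t' - \<gamma> t)\<bar> \<le> e * norm (\<gamma> t' - \<gamma> t)"
  shows "integral {a..b} (\<lambda>s. g s \<bullet> h s) = \<Phi> b - \<Phi> a"
proof -
  define F where "F t = \<Phi> t - integral {a..t} (\<lambda>s. g s \<bullet> h s)" for t
  define M where "M t = integral {a..t} (\<lambda>s. norm (h s))" for t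
  have gh: "(\<lambda>s. g s \<bullet> h s) integrable_on {a..b}" and nh: "(\<lambda>s. norm (h s)) integrable_on {a..b}"
    using absolutely_integrable_inner_continuous[OF g h] h by (simp_all add: absolutely_integrable_on_def)
  have "F b = F a"
  proof (rule eq_if_increments_dominated[OF \<open>a \<le> b\<close>])
    fix e :: real
    assume "e > 0"
    then obtain d1 where "d1 > 0" and d1: "\<forall>t t'. a \<le> t \<longrightarrow> t \<le> t' \<longrightarrow> t' \<le> b \<longrightarrow> t' - t < d1 \<longrightarrow>
                   \<bar>\<Phi> t' - \<Phi> t - g t \<bullet> (\<gamma> t' - \<gamma> t)\<bar> \<le> e / 2 * norm (\<gamma> t' - \<gamma> t)"
      using linear[of "e / 2"] by auto
    obtain d2 where "d2 > 0"
      and d2: "\<And>s t. s \<in> {a..b} \<Longrightarrow> t \<in> {a..b} \<Longrightarrow> dist s t < d2 \<Longrightarrow> dist (g s) (g t) < e / 2"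
      using compact_uniformly_continuous[OF g compact_Icc] \<open>e > 0\<close>
      unfolding uniformly_continuous_on_def by (meson half_gt_zero)
    have "\<bar>F t' - F t\<bar> \<le> e * (M t' - M t)"
      if t: "a \<le> t" "t \<le> t'" "t' \<le> b" "t' - t < min d1 d2" for t t'
    proof -
      have "{t..t'} \<subseteq> {a..b}" using t by auto
      then have ht: "h absolutely_integrable_on {t..t'}" and gt: "continuous_on {t..t'} g"
        using absolutely_integrable_on_subinterval[OF h] continuous_on_subset[OF g] by blast+
      have h_int: "(h has_integral (\<gamma> t' - \<gamma> t)) {t..t'}"
        using antiderivative_onD[OF \<gamma> t(1,2)] t by simp
      have M_incr: "M t' - M t = integral {t..t'} (\<lambda>s. norm (h s))"
        using integral_Icc_increment[OF nh t(1-3)] by (simp add: M_def)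
      have "\<bar>\<Phi> t' - \<Phi> t - g t \<bullet> (\<gamma> t' - \<gamma> t)\<bar> \<le> e / 2 * norm (\<gamma> t' - \<gamma> t)"
        using d1 t by auto
      also have "norm (\<gamma> t' - \<gamma> t) \<le> M t' - M t"
        unfolding M_incr integral_unique[OF h_int, symmetric]
        using ht by (intro integral_norm_bound_integral) (auto simp: absolutely_integrable_on_def)
      then have "e / 2 * norm (\<gamma> t' - \<gamma> t) \<le> e / 2 * (M t' - M t)"
        using \<open>e > 0\<close> by (intro mult_left_mono) auto
      finally have "\<bar>\<Phi> t' - \<Phi> t - g t \<bullet> (\<gamma> t' - \<gamma> t)\<bar> \<le> e / 2 * (M t' - M t)" .
      moreover have "\<bar>integral {t..t'} (\<lambda>s. g s \<bullet> h s) - g t \<bullet> (\<gamma> t' - \<gamma> t)\<bar> \<le> e / 2 * (M t' - M t)"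
        unfolding M_incr
      proof (rule integral_inner_frozen_estimate[OF gt ht h_int])
        show "norm (g s - g t) \<le> e / 2" if "s \<in> {t..t'}" for s
          using d2[of s t] that t by (auto simp: dist_norm dist_real_def)
      qed
      moreover have "F t' - F t = (\<Phi> t' - \<Phi> t - g t \<bullet> (\<gamma> t' - \<gamma> t))
          - (integral {t..t'} (\<lambda>s. g s \<bullet> h s) - g t \<bullet> (\<gamma> t' - \<gamma> t))"
        using integral_Icc_increment[OF gh t(1-3)] by (simp add: F_def)
      ultimately show ?thesis
        using abs_triangle_ineq4[of "\<Phi> t' - \<Phi> t - g t \<bullet> (\<gamma> t' - \<gamma> t)"] by linarith
    qed
    then show "\<exists>d>0. \<forall>t t'. a \<le> t \<longrightarrow> t \<le> t' \<longrightarrow> t' \<le> b \<longrightarrow> t' - t < d \<longrightarrow>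
                 \<bar>F t' - F t\<bar> \<le> e * (M t' - M t)"
      using \<open>d1 > 0\<close> \<open>d2 > 0\<close> by (intro exI[of _ "min d1 d2"]) auto
  qed
  then show ?thesis by (simp add: F_def)
qed

lemma integral_inner_eq_if_same_antiderivative:
  fixes g h1 h2 \<gamma> :: "real \<Rightarrow> 'a::euclidean_space"
  assumes "a \<le> b" and g: "continuous_on {a..b} g"
    and h1: "h1 absolutely_integrable_on {a..b}" and h2: "h2 absolutely_integrable_on {a..b}"
    and "antiderivative_on a b h1 \<gamma>" and "antiderivative_on a b h2 \<gamma>"
  shows "integral {a..b} (\<lambda>s. g s \<bullet> h1 s) = integral {a..b} (\<lambda>s. g s \<bullet> h2 s)"
proof -
  have "integral {a..b} (\<lambda>s. g s \<bullet> (h1 s - h2 s)) = (\<lambda>_. 0) b - (\<lambda>_. 0) a"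
  proof (rule integral_inner_eq_if_locally_linear[OF \<open>a \<le> b\<close> g])
    show "(\<lambda>s. h1 s - h2 s) absolutely_integrable_on {a..b}"
      using h1 h2 by (rule set_integral_diff)
    show "antiderivative_on a b (\<lambda>s. h1 s - h2 s) (\<lambda>s. \<gamma> s - \<gamma> s)"
      using assms(5,6) by (rule antiderivative_on_diff)
  qed auto
  moreover have "(\<lambda>s. g s \<bullet> h1 s) integrable_on {a..b}" "(\<lambda>s. g s \<bullet> h2 s) integrable_on {a..b}"
    using absolutely_integrable_inner_continuous[OF g h1] absolutely_integrable_inner_continuous[OF g h2]
    by (simp_all add: absolutely_integrable_on_def)
  ultimately show ?thesis
    by (simp add: inner_diff_right integral_diff)
qed

lemma uniformly_continuous_near_compact:
  fixes \<beta> :: "'a::euclidean_space \<Rightarrow> 'b::metric_space"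
  assumes "open Q" and \<beta>: "continuous_on Q \<beta>" and "compact K" "K \<subseteq> Q" and "e > 0"
  obtains r where "r > 0" and "\<And>x z. x \<in> K \<Longrightarrow> dist x z < r \<Longrightarrow> z \<in> Q \<and> dist (\<beta> z) (\<beta> x) < e"
proof -
  obtain \<epsilon> where "\<epsilon> > 0" and "(\<Union>x\<in>K. cball x \<epsilon>) \<subseteq> Q"
    using compact_subset_open_imp_cball_epsilon_subset[OF \<open>compact K\<close> \<open>open Q\<close> \<open>K \<subseteq> Q\<close>] .
  define C where "C = (\<Union>x\<in>K. cball x \<epsilon>)"
  have "C \<subseteq> Q" unfolding C_def by fact
  have "C = (\<Union>x\<in>K. (+) x ` cball 0 \<epsilon>)"
    unfolding C_def using cball_translation[of _ 0 \<epsilon>] by simp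
  also have "\<dots> = (\<Union>x\<in>K. \<Union>v\<in>cball 0 \<epsilon>. {x + v})" by blast
  finally have "compact C"
    using compact_sums'[OF \<open>compact K\<close> compact_cball] by simp
  then obtain \<delta> where "\<delta> > 0"
    and \<delta>: "\<And>y z. y \<in> C \<Longrightarrow> z \<in> C \<Longrightarrow> dist z y < \<delta> \<Longrightarrow> dist (\<beta> z) (\<beta> y) < e"
    using compact_uniformly_continuous[OF continuous_on_subset[OF \<beta>]] \<open>e > 0\<close> \<open>C \<subseteq> Q\<close>
    unfolding uniformly_continuous_on_def by metis
  show ?thesis
  proof (rule that[of "min \<epsilon> \<delta>"])
    show "min \<epsilon> \<delta> > 0" using \<open>\<epsilon> > 0\<close> \<open>\<delta> > 0\<close> by simp
    fix x z
    assume "x \<in> K" and "dist x z < min \<epsilon> \<delta>"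
    then have "x \<in> C" and "z \<in> C"
      using \<open>\<epsilon> > 0\<close> by (auto simp: C_def intro!: bexI[of _ x])
    then show "z \<in> Q \<and> dist (\<beta> z) (\<beta> x) < e"
      using \<delta> \<open>C \<subseteq> Q\<close> \<open>dist x z < min \<epsilon> \<delta>\<close> by (auto simp: dist_commute)
  qed
qed

lemma uniform_linearization_on_compact:
  fixes f :: "'a::euclidean_space \<Rightarrow> real" and \<beta> :: "'a \<Rightarrow> 'a"
  assumes "open Q" and f: "\<And>x. x \<in> Q \<Longrightarrow> (f has_derivative (\<lambda>v. \<beta> x \<bullet> v)) (at x)"
    and \<beta>: "continuous_on Q \<beta>" and "compact K" "K \<subseteq> Q" and "e > 0"
  obtains r where "r > 0"
    "\<And>x y. x \<in> K \<Longrightarrow> dist x y < r \<Longrightarrow> \<bar>f y - f x - \<beta> x \<bullet> (y - x)\<bar> \<le> e * norm (y - x)"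
proof -
  obtain r where "r > 0" and r: "\<And>x z. x \<in> K \<Longrightarrow> dist x z < r \<Longrightarrow> z \<in> Q \<and> dist (\<beta> z) (\<beta> x) < e"
    using uniformly_continuous_near_compact[OF \<open>open Q\<close> \<beta> \<open>compact K\<close> \<open>K \<subseteq> Q\<close> \<open>e > 0\<close>] by blast
  show ?thesis
  proof (rule that[OF \<open>r > 0\<close>])
    fix x y
    assume "x \<in> K" and "dist x y < r"
    have "norm (f y - f x - \<beta> x \<bullet> (y - x)) \<le> norm (y - x) * e"
    proof (rule differentiable_bound_linearization[where S = "ball x r" and f' = "\<lambda>z v. \<beta> z \<bullet> v"])
      show "x + u *\<^sub>R (y - x) \<in> ball x r" if "u \<in> {0..1}" for u
      proof -
        have "dist x (x + u *\<^sub>R (y - x)) = \<bar>u\<bar> * dist x y" by (simp add: dist_norm norm_minus_commute)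
        also have "\<dots> \<le> dist x y" using that by (auto intro: mult_left_le_one_le)
        finally show ?thesis using \<open>dist x y < r\<close> by simp
      qed
      show "(f has_derivative (\<lambda>v. \<beta> z \<bullet> v)) (at z within ball x r)" if "z \<in> ball x r" for z
        using f[of z] r[OF \<open>x \<in> K\<close>, of z] that by (simp add: has_derivative_at_withinI)
      show "onorm ((\<lambda>v. \<beta> z \<bullet> v) - (\<lambda>v. \<beta> x \<bullet> v)) \<le> e" if "z \<in> ball x r" for z
      proof (rule onorm_le)
        fix v :: 'a
        have "norm (\<beta> z - \<beta> x) \<le> e"
          using r[OF \<open>x \<in> K\<close>, of z] that by (simp add: dist_norm)
        then have "norm (\<beta> z - \<beta> x) * norm v \<le> e * norm v" by (rule mult_right_mono) simp
        then show "norm (((\<lambda>v. \<beta> z \<bullet> v) - (\<lambda>v. \<beta> x \<bullet> v)) v) \<le> e * norm v"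
          using Cauchy_Schwarz_ineq2[of "\<beta> z - \<beta> x" v] by (simp add: inner_diff_left)
      qed
      show "x \<in> ball x r" using \<open>r > 0\<close> by simp
    qed
    then show "\<bar>f y - f x - \<beta> x \<bullet> (y - x)\<bar> \<le> e * norm (y - x)"
      by (simp add: mult.commute)
  qed
qed

lemma integral_inner_gradient_eq_diff:
  fixes f :: "'a::euclidean_space \<Rightarrow> real" and \<beta> :: "'a \<Rightarrow> 'a" and \<gamma> h :: "real \<Rightarrow> 'a"
  assumes "open Q" and f: "\<And>x. x \<in> Q \<Longrightarrow> (f has_derivative (\<lambda>v. \<beta> x \<bullet> v)) (at x)"
    and \<beta>: "continuous_on Q \<beta>" and "a \<le> b" and "\<gamma> ` {a..b} \<subseteq> Q"
    and h: "h absolutely_integrable_on {a..b}" and \<gamma>: "antiderivative_on a b h \<gamma>"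
  shows "integral {a..b} (\<lambda>s. \<beta> (\<gamma> s) \<bullet> h s) = f (\<gamma> b) - f (\<gamma> a)"
proof (rule integral_inner_eq_if_locally_linear[OF \<open>a \<le> b\<close> _ h \<gamma>])
  have \<gamma>_cont: "continuous_on {a..b} \<gamma>"
    using antiderivative_on_imp_continuous_on[OF \<gamma>] .
  then show "continuous_on {a..b} (\<lambda>s. \<beta> (\<gamma> s))"
    using continuous_on_compose2[OF \<beta> _ \<open>\<gamma> ` {a..b} \<subseteq> Q\<close>] by blast
  fix e :: real
  assume "e > 0"
  obtain r where "r > 0" and r: "\<And>x y. x \<in> \<gamma> ` {a..b} \<Longrightarrow> dist x y < r \<Longrightarrow>
      \<bar>f y - f x - \<beta> x \<bullet> (y - x)\<bar> \<le> e * norm (y - x)"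
    using uniform_linearization_on_compact[OF \<open>open Q\<close> f \<beta> compact_continuous_image[OF \<gamma>_cont compact_Icc]
        \<open>\<gamma> ` {a..b} \<subseteq> Q\<close> \<open>e > 0\<close>] by blast
  obtain d where "d > 0"
    and d: "\<And>s t. s \<in> {a..b} \<Longrightarrow> t \<in> {a..b} \<Longrightarrow> dist t s < d \<Longrightarrow> dist (\<gamma> t) (\<gamma> s) < r"
    using compact_uniformly_continuous[OF \<gamma>_cont compact_Icc] \<open>r > 0\<close>
    unfolding uniformly_continuous_on_def by metis
  have "\<bar>f (\<gamma> t') - f (\<gamma> t) - \<beta> (\<gamma> t) \<bullet> (\<gamma> t' - \<gamma> t)\<bar> \<le> e * norm (\<gamma> t' - \<gamma> t)"
    if "a \<le> t" "t \<le> t'" "t' \<le> b" "t' - t < d" for t t'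
    using r[of "\<gamma> t" "\<gamma> t'"] d[of t t'] that by (auto simp: dist_real_def dist_commute)
  then show "\<exists>d>0. \<forall>t t'. a \<le> t \<longrightarrow> t \<le> t' \<longrightarrow> t' \<le> b \<longrightarrow> t' - t < d \<longrightarrow>
      \<bar>f (\<gamma> t') - f (\<gamma> t) - \<beta> (\<gamma> t) \<bullet> (\<gamma> t' - \<gamma> t)\<bar> \<le> e * norm (\<gamma> t' - \<gamma> t)"
    using \<open>d > 0\<close> by blast
qed

lemma W12_loop_absolutely_integrable:
  assumes "W12_loop Q q q'"
  shows "q' absolutely_integrable_on {a..b}"
proof (cases "a \<le> b")
  case True
  then show ?thesis
    using assms absolutely_integrable_on_if_square_integrable unfolding W12_loop_def by blast
qed simp

lemma W12_loop_antiderivative_on: "W12_loop Q q q' \<Longrightarrow> antiderivative_on a b q' q"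
  unfolding W12_loop_def antiderivative_on_def by blast

lemma integral_inner_period_shift:
  fixes f :: "'a::euclidean_space \<Rightarrow> real" and \<beta> :: "'a \<Rightarrow> 'a" and \<alpha> \<gamma> h :: "real \<Rightarrow> 'a"
  assumes "open Q" and f: "\<And>x. x \<in> Q \<Longrightarrow> (f has_derivative (\<lambda>v. \<beta> x \<bullet> v)) (at x)"
    and \<beta>: "continuous_on Q \<beta>"
    and \<gamma>_periodic: "\<And>t. \<gamma> (t + 1) = \<gamma> t" and \<gamma>_Q: "\<And>t. \<gamma> t \<in> Q"
    and h: "\<And>a b. h absolutely_integrable_on {a..b}" and \<gamma>: "\<And>a b. antiderivative_on a b h \<gamma>"
    and \<alpha>: "\<And>a b. continuous_on {a..b} \<alpha>" and \<alpha>_shift: "\<And>t. \<alpha> (t + 1) = \<alpha> t + \<beta> (\<gamma> t)"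
  shows "integral {c + 1..c + 1 + 1} (\<lambda>t. \<alpha> t \<bullet> h t) = integral {c..c + 1} (\<lambda>t. \<alpha> t \<bullet> h t)"
proof -
  let ?I = "{c..c + 1}"
  have h_shift: "antiderivative_on c (c + 1) (\<lambda>s. h (s + 1)) \<gamma>"
    unfolding antiderivative_on_def
  proof (intro allI impI)
    fix s t :: real
    assume "s \<le> t"
    then have "(h has_integral \<gamma> (t + 1) - \<gamma> (s + 1)) {s + 1..t + 1}"
      by (intro antiderivative_onD[OF \<gamma>]) auto
    then have "(h has_integral \<gamma> t - \<gamma> s) {s + 1..t + 1}"
      by (simp only: \<gamma>_periodic)
    then show "((\<lambda>s. h (s + 1)) has_integral \<gamma> t - \<gamma> s) {s..t}"
      using has_integral_shift_Icc_real[of h 1 "\<gamma> t - \<gamma> s" s t] by (simp add: o_def add.commute)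
  qed
  have h_shift_abs: "(\<lambda>s. h (s + 1)) absolutely_integrable_on ?I"
    using h[of "c + 1" "c + 1 + 1"] integrable_shift_real_ivl[of h "c + 1" "c + 1 + 1" 1]
      integrable_shift_real_ivl[of "\<lambda>s. norm (h s)" "c + 1" "c + 1 + 1" 1]
    unfolding absolutely_integrable_on_def by (simp add: add.commute)
  have \<alpha>_shift_cont: "continuous_on ?I (\<lambda>s. \<alpha> (s + 1))"
    by (rule continuous_on_compose2[OF \<alpha>[of "c + 1" "c + 1 + 1"]]) (auto intro: continuous_intros)
  have \<beta>\<gamma>_cont: "continuous_on ?I (\<lambda>s. \<beta> (\<gamma> s))"
    using continuous_on_compose2[OF \<beta> antiderivative_on_imp_continuous_on[OF \<gamma>]] \<gamma>_Q by blast
  have "integral {c + 1..c + 1 + 1} (\<lambda>t. \<alpha> t \<bullet> h t) = integral ?I (\<lambda>s. \<alpha> (s + 1) \<bullet> h (s + 1))"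
    using integral_shift_real_ivl[of "c + 1" 1 "c + 1 + 1" "\<lambda>t. \<alpha> t \<bullet> h t"] by (simp add: add.commute)
  also have "\<dots> = integral ?I (\<lambda>s. \<alpha> (s + 1) \<bullet> h s)"
    \<comment> \<open>\<open>h\<close> need not be periodic: \<open>h (s + 1)\<close> and \<open>h s\<close> are just two weak derivatives of \<open>\<gamma>\<close>\<close>
    by (rule integral_inner_eq_if_same_antiderivative[OF _ \<alpha>_shift_cont h_shift_abs h h_shift \<gamma>]) simp
  also have "\<dots> = integral ?I (\<lambda>s. \<alpha> s \<bullet> h s) + integral ?I (\<lambda>s. \<beta> (\<gamma> s) \<bullet> h s)"
    unfolding \<alpha>_shift inner_add_left
    using absolutely_integrable_inner_continuous[OF \<alpha> h] absolutely_integrable_inner_continuous[OF \<beta>\<gamma>_cont h]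
    by (intro integral_add) (simp_all add: absolutely_integrable_on_def)
  also have "integral ?I (\<lambda>s. \<beta> (\<gamma> s) \<bullet> h s) = f (\<gamma> (c + 1)) - f (\<gamma> c)"
    using \<gamma>_Q by (intro integral_inner_gradient_eq_diff[OF \<open>open Q\<close> f \<beta> _ _ h \<gamma>]) auto
  finally show ?thesis using \<gamma>_periodic by simp
qed

lemma eq_at_integers_if_periodic:
  fixes F :: "real \<Rightarrow> 'a"
  assumes "\<And>c. F (c + 1) = F c"
  shows "F (real_of_int k) = F 0"
proof (induction k rule: int_induct[where k = 0])
  case base
  show ?case by simp
next
  case (step1 i)
  have "F (real_of_int (i + 1)) = F (real_of_int i)" using assms[of "real_of_int i"] by simp
  also have "\<dots> = F 0" by (rule step1.IH)
  finally show ?case .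
next
  case (step2 i)
  have "F (real_of_int (i - 1)) = F (real_of_int (i - 1) + 1)" by (rule assms[symmetric])
  also have "\<dots> = F 0" using step2.IH by simp
  finally show ?case .
qed

theorem proposition3p4:
  fixes Q :: "(real \<times> real) set"
    and A1 A2 :: "real \<Rightarrow> real \<times> real \<Rightarrow> real"
    and q q' :: "real \<Rightarrow> real \<times> real"
  assumes "open Q"
    and "vanishing_H1_dR Q"
    and "twisted_periodic_form Q A1 A2"
    and "W12_loop Q q q'"
  shows "\<forall>k l :: int.
           pullback_integrand A1 A2 q q' integrable_on {real_of_int k .. real_of_int k + 1} \<and>
           integral {real_of_int k .. real_of_int k + 1} (pullback_integrand A1 A2 q q') =
           integral {real_of_int l .. real_of_int l + 1} (pullback_integrand A1 A2 q q')"
proof -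
  obtain \<beta> f where \<beta>: "continuous_on Q \<beta>" and f: "\<And>x. x \<in> Q \<Longrightarrow> (f has_derivative (\<lambda>v. \<beta> x \<bullet> v)) (at x)"
    and form_shift: "\<And>t x. x \<in> Q \<Longrightarrow> (A1 (t + 1) x, A2 (t + 1) x) = (A1 t x, A2 t x) + \<beta> x"
    by (rule twisted_periodic_form_shift_exact[OF assms(1-3)]) (rule that)
  have q_periodic: "\<And>t. q (t + 1) = q t" and q_Q: "\<And>t. q t \<in> Q"
    using assms(4) by (simp_all add: W12_loop_def)
  note q' = W12_loop_absolutely_integrable[OF assms(4)] W12_loop_antiderivative_on[OF assms(4)]
  define \<alpha> where "\<alpha> t = (A1 t (q t), A2 t (q t))" for t
  have \<alpha>_cont: "continuous_on {a..b} \<alpha>" for a b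
    unfolding \<alpha>_def
    using twisted_periodic_form_continuous_along[OF assms(3) antiderivative_on_imp_continuous_on[OF q'(2)] q_Q] .
  have \<alpha>_shift: "\<alpha> (t + 1) = \<alpha> t + \<beta> (q t)" for t
    using form_shift[OF q_Q, of t] q_periodic by (simp add: \<alpha>_def)
  have integrand: "pullback_integrand A1 A2 q q' = (\<lambda>t. \<alpha> t \<bullet> q' t)"
    by (simp add: fun_eq_iff pullback_integrand_def \<alpha>_def inner_prod_def)
  have "integral {c + 1..c + 1 + 1} (\<lambda>t. \<alpha> t \<bullet> q' t) = integral {c..c + 1} (\<lambda>t. \<alpha> t \<bullet> q' t)" for c
    by (rule integral_inner_period_shift[OF assms(1) f \<beta> q_periodic q_Q q' \<alpha>_cont \<alpha>_shift])
  then show ?thesis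
    unfolding integrand
    using eq_at_integers_if_periodic[of "\<lambda>c. integral {c..c + 1} (\<lambda>t. \<alpha> t \<bullet> q' t)"]
      absolutely_integrable_inner_continuous[OF \<alpha>_cont q'(1)]
    by (simp add: absolutely_integrable_on_def)
qed

end
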